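(* Let $A\in\mathbb{R}^{n\times n}$, $B\in\mathbb{R}^{n\times m}$, $C\in\mathbb{R}^{m\times n}$, $D\in\mathbb{R}^{m\times m}$ with $D+D^T=0$, and consider the system $\dot x=Ax+Bu$, $y=Cx+Du$. The following two statements are equivalent: (1) There exists a change of basis $x=Tz$ with an invertible $T\in\mathbb{R}^{n\times n}$ such that the resulting realization $(T^{-1}AT,\,T^{-1}B,\,CT,\,D)$ has port-Hamiltonian structure, i.e. there exist $J,R,Q\in\mathbb{R}^{n\times n}$, $F,P\in\mathbb{R}^{n\times m}$, $S,N\in\mathbb{R}^{m\times m}$ with $J=-J^T$, $R=R^T$, $Q=Q^T$ positive definite, $S=S^T$, $N=-N^T$, $\begin{bmatrix}R&P\\P^T&S\end{bmatrix}$ symmetric positive semidefinite, and $T^{-1}AT=(J-R)Q$, $T^{-1}B=F-P$, $CT=(F+P)^TQ$, $D=S+N$. (2) There exists an invertible matrix $T\in\mathbb{R}^{n\times n}$ such that $(TB)^T=CT^{-1}$ and $(TAT^{-1})^T+TAT^{-1}$ is negative semidefinite. *)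

theory Defs
  imports "HOL-Analysis.Analysis"
begin

text \<open>Matrices are HOL-Analysis matrices: a real r x c matrix has type real^'c^'r.\<close>

definition symmetric_mat :: "real^'n^'n \<Rightarrow> bool" where
  "symmetric_mat M \<longleftrightarrow> transpose M = M"

definition skew_mat :: "real^'n^'n \<Rightarrow> bool" where
  "skew_mat M \<longleftrightarrow> transpose M = - M"

definition pos_def_mat :: "real^'n^'n \<Rightarrow> bool" where
  "pos_def_mat M \<longleftrightarrow> (\<forall>x. x \<noteq> 0 \<longrightarrow> x \<bullet> (M *v x) > 0)"

definition pos_semidef_mat :: "real^'n^'n \<Rightarrow> bool" where
  "pos_semidef_mat M \<longleftrightarrow> (\<forall>x. x \<bullet> (M *v x) \<ge> 0)"

definition neg_semidef_mat :: "real^'n^'n \<Rightarrow> bool" where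
  "neg_semidef_mat M \<longleftrightarrow> (\<forall>x. x \<bullet> (M *v x) \<le> 0)"

definition block_mat ::
  "real^'n^'n \<Rightarrow> real^'m^'n \<Rightarrow> real^'n^'m \<Rightarrow> real^'m^'m \<Rightarrow> real^('n + 'm)^('n + 'm)" where
  "block_mat A B C D = (\<chi> i j. case i of
       Inl i' \<Rightarrow> (case j of Inl j' \<Rightarrow> A $ i' $ j' | Inr j' \<Rightarrow> B $ i' $ j')
     | Inr i' \<Rightarrow> (case j of Inl j' \<Rightarrow> C $ i' $ j' | Inr j' \<Rightarrow> D $ i' $ j'))"

end

theory Submission
  imports Defs
begin

text \<open>
  Since D is skew-symmetric and D = S + N, the symmetric part S vanishes, and then positive
  semidefiniteness of the block matrix [[R, P], [P^T, 0]] forces P = 0 and R >= 0.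
  Factoring the energy matrix as Q = U^T U and passing to the coordinates U T^-1, the
  realization becomes (U (J - R) U^T, U F, (U F)^T, D): its output matrix is the transpose
  of its input matrix, and the symmetric part of its state matrix is -U R U^T <= 0.
  Conversely, in such coordinates a port-Hamiltonian structure with Q = I is obtained by
  splitting the state matrix into its skew-symmetric and symmetric parts.
\<close>

lemma quadratic_nonneg_imp_linear_coeff_eq_0:
  fixes a b :: real
  assumes "\<And>t. 0 \<le> t * t * a + 2 * t * b"
  shows "b = 0"
proof -
  define s where "s = 1 / (\<bar>a\<bar> + 1)"
  have s: "s > 0" "s * a < 1"
    unfolding s_def by (auto simp: field_simps abs_if)
  have "0 \<le> (- s * b) * (- s * b) * a + 2 * (- s * b) * b" by (rule assms)
  also have "\<dots> = (s * b * b) * (s * a - 2)" by (simp add: algebra_simps)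
  finally have "s * (b * b) \<le> 0"
    using s by (simp add: zero_le_mult_iff)
  then have "b * b \<le> 0"
    using s by (simp add: mult_le_0_iff)
  then show "b = 0"
    by (auto simp: mult_le_0_iff)
qed

lemma transpose_add [simp]: "transpose (A + B) = transpose A + transpose (B :: 'a::plus^'n^'m)"
  by (simp add: transpose_def vec_eq_iff)

lemma transpose_diff [simp]: "transpose (A - B) = transpose A - transpose (B :: 'a::minus^'n^'m)"
  by (simp add: transpose_def vec_eq_iff)

lemma transpose_minus [simp]: "transpose (- A) = - transpose (A :: 'a::uminus^'n^'m)"
  by (simp add: transpose_def vec_eq_iff)

lemma transpose_zero [simp]: "transpose (0 :: 'a::zero^'n^'m) = 0"
  by (simp add: transpose_def vec_eq_iff)

lemma matrix_inv_right:
  fixes A :: "'a::semiring_1^'n^'m"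
  assumes "invertible A"
  shows "A ** matrix_inv A = mat 1"
  using someI_ex[OF assms[unfolded invertible_def]] by (simp add: matrix_inv_def)

lemma matrix_inv_left:
  fixes A :: "'a::semiring_1^'n^'m"
  assumes "invertible A"
  shows "matrix_inv A ** A = mat 1"
  using someI_ex[OF assms[unfolded invertible_def]] by (simp add: matrix_inv_def)

lemma matrix_inv_unique:
  fixes A B :: "'a::field^'n^'n"
  assumes "A ** B = mat 1"
  shows "matrix_inv A = B"
proof -
  have "invertible A" using assms invertible_right_inverse by blast
  have "matrix_inv A = (matrix_inv A ** A) ** B"
    by (simp add: assms flip: matrix_mul_assoc)
  then show ?thesis by (simp add: matrix_inv_left[OF \<open>invertible A\<close>])
qed

lemma invertible_matrix_inv:
  fixes A :: "'a::field^'n^'n"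
  assumes "invertible A"
  shows "invertible (matrix_inv A)"
  using matrix_inv_left[OF assms] invertible_right_inverse by blast

lemma matrix_inv_matrix_inv:
  fixes A :: "'a::field^'n^'n"
  assumes "invertible A"
  shows "matrix_inv (matrix_inv A) = A"
  by (rule matrix_inv_unique) (rule matrix_inv_left[OF assms])

lemma matrix_inv_mult:
  fixes A B :: "'a::field^'n^'n"
  assumes "invertible A" "invertible B"
  shows "matrix_inv (A ** B) = matrix_inv B ** matrix_inv A"
proof (rule matrix_inv_unique)
  have "A ** B ** (matrix_inv B ** matrix_inv A) = A ** (B ** matrix_inv B) ** matrix_inv A"
    by (simp only: matrix_mul_assoc)
  then show "A ** B ** (matrix_inv B ** matrix_inv A) = mat 1"
    by (simp add: matrix_inv_right assms)
qed

lemma transpose_matrix_mult_component: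
  fixes X :: "real^'k^'n" and Y :: "real^'l^'n"
  shows "(transpose X ** Y) $ i $ j = column i X \<bullet> column j Y"
  by (simp add: matrix_matrix_mult_def transpose_def column_def inner_vec_def)

lemma column_matrix_mult:
  fixes A :: "'a::semiring_1^'n^'m"
  shows "column j (A ** B) = A *v column j B"
  by (simp add: matrix_matrix_mult_def matrix_vector_mult_def column_def vec_eq_iff)

lemma matrix_vector_mult_uminus [simp]:
  fixes A :: "'a::ring_1^'n^'m"
  shows "(- A) *v x = - (A *v x)"
  by (simp add: matrix_vector_mult_def vec_eq_iff sum_negf)

lemma inner_transpose_matrix_vector:
  fixes M :: "real^'n^'m"
  shows "x \<bullet> (transpose M *v y) = y \<bullet> (M *v x)"
  by (metis dot_lmul_matrix inner_commute transpose_matrix_vector)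

lemma quadratic_form_transpose:
  fixes M :: "real^'n^'n"
  shows "x \<bullet> (transpose M *v x) = x \<bullet> (M *v x)"
  by (rule inner_transpose_matrix_vector)

lemma symmetric_mat_inner_commute:
  fixes Q :: "real^'n^'n"
  assumes "symmetric_mat Q"
  shows "x \<bullet> (Q *v y) = y \<bullet> (Q *v x)"
  by (metis assms inner_transpose_matrix_vector symmetric_mat_def)

lemma skew_mat_quadratic_form_eq_0:
  fixes J :: "real^'n^'n"
  assumes "skew_mat J"
  shows "x \<bullet> (J *v x) = 0"
proof -
  have "x \<bullet> (J *v x) = x \<bullet> (transpose J *v x)"
    by (rule quadratic_form_transpose[symmetric])
  also have "\<dots> = - (x \<bullet> (J *v x))"
    using assms unfolding skew_mat_def by simp
  finally show ?thesis by simp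
qed

lemma quadratic_form_congruence:
  fixes U :: "real^'n^'m" and M :: "real^'n^'n"
  shows "x \<bullet> ((U ** M ** transpose U) *v x) = (transpose U *v x) \<bullet> (M *v (transpose U *v x))"
  by (simp add: dot_lmul_matrix flip: matrix_vector_mul_assoc)

lemma neg_semidef_mat_transpose_add_iff:
  fixes M :: "real^'n^'n"
  shows "neg_semidef_mat (transpose M + M) \<longleftrightarrow> (\<forall>x. x \<bullet> (M *v x) \<le> 0)"
  unfolding neg_semidef_mat_def matrix_vector_mult_add_rdistrib inner_add_right
    quadratic_form_transpose by simp

lemma skew_mat_iff_add_transpose_eq_0:
  fixes M :: "real^'n^'n"
  shows "skew_mat M \<longleftrightarrow> M + transpose M = 0"
  by (auto simp: skew_mat_def eq_neg_iff_add_eq_0 add.commute)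

lemma symmetric_skew_mat_eq_0:
  fixes S :: "real^'n^'n"
  assumes "symmetric_mat S" "skew_mat S"
  shows "S = 0"
proof -
  have "S = - S" using assms by (simp add: symmetric_mat_def skew_mat_def)
  then show ?thesis by (simp add: eq_neg_iff_add_eq_0 flip: scaleR_2)
qed

definition block_vec :: "real^'n \<Rightarrow> real^'m \<Rightarrow> real^('n + 'm)" where
  "block_vec x y = (\<chi> k. case k of Inl i \<Rightarrow> x $ i | Inr j \<Rightarrow> y $ j)"

lemma block_vec_cases:
  obtains x y where "z = block_vec x y"
proof
  show "z = block_vec (\<chi> i. z $ Inl i) (\<chi> j. z $ Inr j)"
    by (simp add: block_vec_def vec_eq_iff split: sum.split)
qed

lemma sum_UNIV_sum_type:
  fixes g :: "'n::finite + 'm::finite \<Rightarrow> 'a::comm_monoid_add"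
  shows "sum g UNIV = (\<Sum>i\<in>UNIV. g (Inl i)) + (\<Sum>j\<in>UNIV. g (Inr j))"
  by (simp add: sum.Plus flip: UNIV_Plus_UNIV)

lemma quadratic_form_block_mat:
  fixes R :: "real^'n^'n" and P :: "real^'m^'n" and P' :: "real^'n^'m" and S :: "real^'m^'m"
  shows "block_vec x y \<bullet> (block_mat R P P' S *v block_vec x y) =
           x \<bullet> (R *v x) + x \<bullet> (P *v y) + y \<bullet> (P' *v x) + y \<bullet> (S *v y)"
  by (simp add: block_vec_def block_mat_def inner_vec_def matrix_vector_mult_def
      sum_UNIV_sum_type sum.distrib sum_distrib_left distrib_left)

lemma symmetric_mat_block_mat_iff:
  fixes R :: "real^'n^'n" and P :: "real^'m^'n" and S :: "real^'m^'m"
  shows "symmetric_mat (block_mat R P (transpose P) S) \<longleftrightarrow> symmetric_mat R \<and> symmetric_mat S"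
  unfolding symmetric_mat_def
  by (auto simp: vec_eq_iff transpose_def block_mat_def split: sum.split)

lemma pos_semidef_block_mat_zero_corner_iff:
  fixes R :: "real^'n^'n" and P :: "real^'m^'n"
  shows "pos_semidef_mat (block_mat R P (transpose P) 0) \<longleftrightarrow> pos_semidef_mat R \<and> P = 0"
proof -
  have form: "block_vec x y \<bullet> (block_mat R P (transpose P) 0 *v block_vec x y)
      = x \<bullet> (R *v x) + 2 * (x \<bullet> (P *v y))" for x y
    using quadratic_form_block_mat[of x y R P "transpose P" 0]
      inner_transpose_matrix_vector[of y P x]
    by (simp del: transpose_matrix_vector)
  have block_form: "pos_semidef_mat (block_mat R P (transpose P) 0) \<longleftrightarrow>
      (\<forall>x y. 0 \<le> x \<bullet> (R *v x) + 2 * (x \<bullet> (P *v y)))"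
    unfolding pos_semidef_mat_def by (metis block_vec_cases form)
  show ?thesis
  proof
    assume "pos_semidef_mat (block_mat R P (transpose P) 0)"
    then have psd: "0 \<le> x \<bullet> (R *v x) + 2 * (x \<bullet> (P *v y))" for x y
      using block_form by blast
    have "x \<bullet> (P *v y) = 0" for x y
    proof (rule quadratic_nonneg_imp_linear_coeff_eq_0)
      fix t
      show "0 \<le> t * t * (x \<bullet> (R *v x)) + 2 * t * (x \<bullet> (P *v y))"
        using psd[of "t *\<^sub>R x" y] by (simp add: algebra_simps)
    qed
    then have "P = 0"
      by (metis inner_eq_zero_iff matrix_eq matrix_vector_mult_0)
    with psd[of _ 0] show "pos_semidef_mat R \<and> P = 0"
      by (simp add: pos_semidef_mat_def)
  qed (unfold block_form, simp add: pos_semidef_mat_def)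
qed

lemma conjugate_residual_orthogonal:
  fixes Q :: "real^'n^'n"
  assumes "finite K" "i \<in> K" "w i \<bullet> (Q *v w i) \<noteq> 0"
    and conj: "\<And>j. j \<in> K \<Longrightarrow> j \<noteq> i \<Longrightarrow> w i \<bullet> (Q *v w j) = 0"
  shows "w i \<bullet> (Q *v (a - (\<Sum>j\<in>K. (w j \<bullet> (Q *v a) / (w j \<bullet> (Q *v w j))) *\<^sub>R w j))) = 0"
proof -
  have "w i \<bullet> (Q *v (\<Sum>j\<in>K. (w j \<bullet> (Q *v a) / (w j \<bullet> (Q *v w j))) *\<^sub>R w j))
      = (\<Sum>j\<in>K. (w j \<bullet> (Q *v a) / (w j \<bullet> (Q *v w j))) * (w i \<bullet> (Q *v w j)))"
    by (simp add: linear_sum[OF matrix_vector_mul_linear] o_def matrix_vector_mult_scaleR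
        inner_sum_right)
  also have "\<dots> = (\<Sum>j\<in>K. if j = i then w i \<bullet> (Q *v a) else 0)"
    using assms by (intro sum.cong) auto
  also have "\<dots> = w i \<bullet> (Q *v a)"
    using assms by simp
  finally show ?thesis
    by (simp only: matrix_vector_mult_diff_distrib inner_diff_right diff_self)
qed

text \<open>
  Gram-Schmidt for the inner product x \<bullet> (Q *v y), started from the unit vectors of K.
  The new vector for k is e_k minus its projections onto the earlier ones; since those
  vanish outside K, its k-th coordinate stays 1, so it is nonzero and hence of positive
  Q-norm, which keeps the projections well defined.
\<close>
lemma pos_def_mat_triangular_conjugate_family:
  fixes Q :: "real^'n^'n"
  assumes "symmetric_mat Q" "pos_def_mat Q" "finite K"
  shows "\<exists>w::'n \<Rightarrow> real^'n. (\<forall>i\<in>K. w i $ i = 1 \<and> (\<forall>j. j \<notin> K \<longrightarrow> w i $ j = 0)) \<and>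
           (\<forall>i\<in>K. \<forall>j\<in>K. i \<noteq> j \<longrightarrow> w i \<bullet> (Q *v w j) = 0)"
  using \<open>finite K\<close>
proof (induction K rule: finite_induct)
  case (insert k K)
  then obtain w :: "'n \<Rightarrow> real^'n"
    where unit_supp: "\<forall>i\<in>K. w i $ i = 1 \<and> (\<forall>j. j \<notin> K \<longrightarrow> w i $ j = 0)"
      and conj: "\<forall>i\<in>K. \<forall>j\<in>K. i \<noteq> j \<longrightarrow> w i \<bullet> (Q *v w j) = 0"
    by (elim exE conjE)
  have pos: "w i \<bullet> (Q *v w i) \<noteq> 0" if "i \<in> K" for i
  proof -
    have "w i \<noteq> 0" using unit_supp that by force
    then have "w i \<bullet> (Q *v w i) > 0" using assms(2) unfolding pos_def_mat_def by blast
    then show ?thesis by simp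
  qed
  define v where "v = axis k 1 - (\<Sum>j\<in>K. (w j \<bullet> (Q *v axis k 1) / (w j \<bullet> (Q *v w j))) *\<^sub>R w j)"
  have v_supp: "v $ j = (if j = k then 1 else 0)" if "j \<notin> K" for j
    using unit_supp that by (simp add: v_def axis_def sum_component)
  have v_conj: "w i \<bullet> (Q *v v) = 0" "v \<bullet> (Q *v w i) = 0" if "i \<in> K" for i
  proof -
    show "w i \<bullet> (Q *v v) = 0"
      unfolding v_def
      by (rule conjugate_residual_orthogonal[where w = w, OF insert.hyps(1) that pos[OF that]])
        (use conj that in auto)
    then show "v \<bullet> (Q *v w i) = 0"
      using symmetric_mat_inner_commute[OF assms(1)] by metis
  qed
  show ?case
  proof (intro exI conjI ballI allI impI)
    show "(w(k := v)) i $ i = 1" if "i \<in> insert k K" for i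
      using that unit_supp v_supp insert.hyps(2) by auto
    show "(w(k := v)) i $ j = 0" if "i \<in> insert k K" "j \<notin> insert k K" for i j
      using that unit_supp v_supp by auto
    show "(w(k := v)) i \<bullet> (Q *v (w(k := v)) j) = 0"
      if "i \<in> insert k K" "j \<in> insert k K" "i \<noteq> j" for i j
      using that conj v_conj insert.hyps(2) by auto
  qed
qed simp

lemma pos_def_mat_congruent_mat_1:
  fixes Q :: "real^'n^'n"
  assumes "symmetric_mat Q" "pos_def_mat Q"
  obtains V :: "real^'n^'n" where "transpose V ** Q ** V = mat 1"
proof -
  obtain w :: "'n \<Rightarrow> real^'n" where unit: "\<And>i. w i $ i = 1"
    and conj: "\<And>i j. i \<noteq> j \<Longrightarrow> w i \<bullet> (Q *v w j) = 0"
    using pos_def_mat_triangular_conjugate_family[OF assms, of UNIV] by auto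
  define d where "d i = w i \<bullet> (Q *v w i)" for i
  have d_pos: "d i > 0" for i
  proof -
    have "w i \<noteq> 0" using unit[of i] by auto
    then show ?thesis using assms(2) unfolding pos_def_mat_def d_def by blast
  qed
  define V :: "real^'n^'n" where "V = (\<chi> a j. w j $ a / sqrt (d j))"
  have column_V: "column j V = (1 / sqrt (d j)) *\<^sub>R w j" for j
    by (simp add: V_def column_def vec_eq_iff)
  have "(transpose V ** (Q ** V)) $ i $ j = mat 1 $ i $ j" for i j
  proof -
    have "(transpose V ** (Q ** V)) $ i $ j
        = (1 / sqrt (d i)) * (1 / sqrt (d j)) * (w i \<bullet> (Q *v w j))"
      by (simp add: transpose_matrix_mult_component column_matrix_mult column_V
          matrix_vector_mult_scaleR)
    also have "\<dots> = mat 1 $ i $ j"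
      using d_pos[of i] conj[of i j] by (cases "i = j") (simp_all add: mat_def d_def[symmetric])
    finally show ?thesis .
  qed
  then have "transpose V ** Q ** V = mat 1"
    by (simp add: vec_eq_iff matrix_mul_assoc)
  then show ?thesis by (rule that)
qed

lemma pos_def_mat_factorization:
  fixes Q :: "real^'n^'n"
  assumes "symmetric_mat Q" "pos_def_mat Q"
  obtains U :: "real^'n^'n" where "invertible U" "Q = transpose U ** U"
proof -
  obtain V :: "real^'n^'n" where V: "transpose V ** Q ** V = mat 1"
    using pos_def_mat_congruent_mat_1[OF assms] .
  then have "invertible V"
    using invertible_left_inverse by blast
  define U where "U = matrix_inv V"
  have VU: "V ** U = mat 1"
    using matrix_inv_right[OF \<open>invertible V\<close>] by (simp add: U_def)
  then have UV: "transpose U ** transpose V = mat 1"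
    by (metis matrix_transpose_mul transpose_mat)
  have "Q = (transpose U ** transpose V) ** Q ** (V ** U)"
    by (simp add: UV VU)
  also have "\<dots> = transpose U ** (transpose V ** Q ** V) ** U"
    by (simp add: matrix_mul_assoc)
  finally have "Q = transpose U ** U"
    by (simp add: V)
  moreover have "invertible U"
    using VU invertible_left_inverse by blast
  ultimately show ?thesis by (rule that[rotated])
qed

definition port_hamiltonian :: "real^'n^'n \<Rightarrow> real^'m^'n \<Rightarrow> real^'n^'m \<Rightarrow> real^'m^'m \<Rightarrow> bool" where
  "port_hamiltonian A B C D \<longleftrightarrow>
     (\<exists>(J :: real^'n^'n) (R :: real^'n^'n) (Q :: real^'n^'n)
        (F :: real^'m^'n) (P :: real^'m^'n) (S :: real^'m^'m) (N :: real^'m^'m).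
        skew_mat J \<and> symmetric_mat R \<and> symmetric_mat Q \<and> pos_def_mat Q \<and>
        symmetric_mat S \<and> skew_mat N \<and>
        symmetric_mat (block_mat R P (transpose P) S) \<and>
        pos_semidef_mat (block_mat R P (transpose P) S) \<and>
        A = (J - R) ** Q \<and> B = F - P \<and> C = transpose (F + P) ** Q \<and> D = S + N)"

lemma passive_imp_port_hamiltonian:
  fixes A :: "real^'n^'n" and B :: "real^'m^'n" and D :: "real^'m^'m"
  assumes "skew_mat D" and "neg_semidef_mat (transpose A + A)"
  shows "port_hamiltonian A B (transpose B) D"
proof -
  define J where "J = (1/2 :: real) *\<^sub>R (A - transpose A)"
  define R where "R = - (1/2 :: real) *\<^sub>R (A + transpose A)"
  have JR: "skew_mat J" "symmetric_mat R"
    by (simp_all add: skew_mat_def symmetric_mat_def J_def R_def transpose_scalar algebra_simps)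
  have R_psd: "pos_semidef_mat R"
  proof -
    have "x \<bullet> (R *v x) = - (x \<bullet> (A *v x))" for x
      unfolding R_def
      by (simp add: matrix_vector_mult_add_rdistrib inner_add_right quadratic_form_transpose
          flip: scaleR_matrix_vector_assoc del: transpose_matrix_vector)
    then show ?thesis
      using assms(2) by (simp add: neg_semidef_mat_transpose_add_iff pos_semidef_mat_def)
  qed
  have A_eq: "A = (J - R) ** mat 1"
    by (simp add: J_def R_def algebra_simps flip: scaleR_add_left)
  have block: "symmetric_mat (block_mat R 0 (transpose 0) (0 :: real^'m^'m))"
    "pos_semidef_mat (block_mat R (0 :: real^'m^'n) (transpose 0) 0)"
    using JR(2) R_psd
    by (simp_all add: symmetric_mat_block_mat_iff pos_semidef_block_mat_zero_corner_iff
        del: transpose_zero) (simp add: symmetric_mat_def)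
  show ?thesis
    unfolding port_hamiltonian_def
    by (rule exI[of _ J], rule exI[of _ R], rule exI[of _ "mat 1"], rule exI[of _ B],
        rule exI[of _ 0], rule exI[of _ 0], rule exI[of _ D])
      (use JR block A_eq assms(1) in \<open>simp add: symmetric_mat_def pos_def_mat_def\<close>)
qed

lemma port_hamiltonian_imp_passive_coordinates:
  fixes A :: "real^'n^'n" and B :: "real^'m^'n" and C :: "real^'n^'m" and D :: "real^'m^'m"
  assumes "skew_mat D" and "port_hamiltonian A B C D"
  obtains U :: "real^'n^'n" where "invertible U" and "transpose (U ** B) = C ** matrix_inv U"
    and "neg_semidef_mat (transpose (U ** A ** matrix_inv U) + U ** A ** matrix_inv U)"
proof -
  obtain J R Q :: "real^'n^'n" and F P :: "real^'m^'n" and S N :: "real^'m^'m"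
    where J: "skew_mat J" and Q: "symmetric_mat Q" "pos_def_mat Q"
      and S: "symmetric_mat S" and N: "skew_mat N"
      and block: "pos_semidef_mat (block_mat R P (transpose P) S)"
      and A: "A = (J - R) ** Q" and B: "B = F - P" and C: "C = transpose (F + P) ** Q"
      and D: "D = S + N"
    using assms(2) unfolding port_hamiltonian_def by blast
  have "S + transpose S = (D + transpose D) - (N + transpose N)"
    by (simp add: D algebra_simps)
  then have "skew_mat S"
    using assms(1) N by (simp add: skew_mat_iff_add_transpose_eq_0)
  then have "S = 0"
    using S symmetric_skew_mat_eq_0 by blast
  then have R: "pos_semidef_mat R" and "P = 0"
    using block pos_semidef_block_mat_zero_corner_iff by blast+
  obtain U :: "real^'n^'n" where U: "invertible U" and QU: "Q = transpose U ** U"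
    using pos_def_mat_factorization[OF Q] .
  have Q_inv: "Q ** matrix_inv U = transpose U"
    by (simp add: QU matrix_inv_right[OF U] flip: matrix_mul_assoc)
  have input_output: "transpose (U ** B) = C ** matrix_inv U"
    by (simp add: B C \<open>P = 0\<close> Q_inv matrix_transpose_mul flip: matrix_mul_assoc)
  have state: "U ** A ** matrix_inv U = U ** (J - R) ** transpose U"
    by (simp add: A Q_inv flip: matrix_mul_assoc)
  have dissipation: "x \<bullet> ((U ** (J - R) ** transpose U) *v x) \<le> 0" for x
    using R skew_mat_quadratic_form_eq_0[OF J]
    by (simp add: quadratic_form_congruence matrix_vector_mult_diff_rdistrib inner_diff_right
        pos_semidef_mat_def del: transpose_matrix_vector)
  show ?thesis
    by (rule that[OF U input_output])
      (simp add: neg_semidef_mat_transpose_add_iff state dissipation)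
qed

theorem corollary3p1:
  fixes A :: "real^'n^'n" and B :: "real^'m^'n" and C :: "real^'n^'m" and D :: "real^'m^'m"
  assumes "D + transpose D = 0"
  shows "(\<exists>T :: real^'n^'n. invertible T \<and>
            (\<exists>(J :: real^'n^'n) (R :: real^'n^'n) (Q :: real^'n^'n)
               (F :: real^'m^'n) (P :: real^'m^'n) (S :: real^'m^'m) (N :: real^'m^'m).
               skew_mat J \<and> symmetric_mat R \<and> symmetric_mat Q \<and> pos_def_mat Q \<and>
               symmetric_mat S \<and> skew_mat N \<and>
               symmetric_mat (block_mat R P (transpose P) S) \<and>
               pos_semidef_mat (block_mat R P (transpose P) S) \<and>
               matrix_inv T ** A ** T = (J - R) ** Q \<and>
               matrix_inv T ** B = F - P \<and>
               C ** T = transpose (F + P) ** Q \<and>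
               D = S + N))
     \<longleftrightarrow>
         (\<exists>T :: real^'n^'n. invertible T \<and>
            transpose (T ** B) = C ** matrix_inv T \<and>
            neg_semidef_mat (transpose (T ** A ** matrix_inv T) + T ** A ** matrix_inv T))"
proof -
  have D: "skew_mat D"
    using assms by (simp add: skew_mat_iff_add_transpose_eq_0)
  show ?thesis
    unfolding port_hamiltonian_def[symmetric]
  proof
    assume "\<exists>T :: real^'n^'n. invertible T \<and>
      port_hamiltonian (matrix_inv T ** A ** T) (matrix_inv T ** B) (C ** T) D"
    then obtain T :: "real^'n^'n" where T: "invertible T"
      and "port_hamiltonian (matrix_inv T ** A ** T) (matrix_inv T ** B) (C ** T) D"
      by blast
    then obtain U :: "real^'n^'n" where U: "invertible U"
      and "transpose (U ** (matrix_inv T ** B)) = C ** T ** matrix_inv U"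
      and "neg_semidef_mat (transpose (U ** (matrix_inv T ** A ** T) ** matrix_inv U)
             + U ** (matrix_inv T ** A ** T) ** matrix_inv U)"
      using port_hamiltonian_imp_passive_coordinates D by blast
    moreover have "matrix_inv (U ** matrix_inv T) = T ** matrix_inv U"
      by (simp add: matrix_inv_mult U invertible_matrix_inv T matrix_inv_matrix_inv)
    ultimately show "\<exists>T' :: real^'n^'n. invertible T' \<and> transpose (T' ** B) = C ** matrix_inv T' \<and>
        neg_semidef_mat (transpose (T' ** A ** matrix_inv T') + T' ** A ** matrix_inv T')"
      by (intro exI[of _ "U ** matrix_inv T"])
        (simp add: invertible_mult U invertible_matrix_inv T matrix_mul_assoc)
  next
    assume "\<exists>T :: real^'n^'n. invertible T \<and> transpose (T ** B) = C ** matrix_inv T \<and>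
      neg_semidef_mat (transpose (T ** A ** matrix_inv T) + T ** A ** matrix_inv T)"
    then obtain T :: "real^'n^'n" where T: "invertible T" and "transpose (T ** B) = C ** matrix_inv T"
      and "neg_semidef_mat (transpose (T ** A ** matrix_inv T) + T ** A ** matrix_inv T)"
      by blast
    then have "port_hamiltonian (T ** A ** matrix_inv T) (T ** B) (C ** matrix_inv T) D"
      using passive_imp_port_hamiltonian[OF D, of "T ** A ** matrix_inv T" "T ** B"] by simp
    then show "\<exists>T' :: real^'n^'n. invertible T' \<and>
        port_hamiltonian (matrix_inv T' ** A ** T') (matrix_inv T' ** B) (C ** T') D"
      using T by (intro exI[of _ "matrix_inv T"]) (simp add: invertible_matrix_inv matrix_inv_matrix_inv)
  qed
qed

end
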